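(* Let $g,h\in G_a$ be covered by $\widehat g,\widehat h\in\widehat G_a$ respectively. (1) If $g$ and $h$ both fix a point $x\in X$, then $\widehat{\mathrm{rot}}_{x,\alpha}(\widehat g\widehat h)=\widehat{\mathrm{rot}}_{x,\alpha}(\widehat g)+\widehat{\mathrm{rot}}_{x,\alpha}(\widehat h)$. (2) If $g$ and $h$ both preserve a Borel probability measure $\mu$ on $X$, then $\widehat{\mathrm{rot}}_{\mu,\alpha}(\widehat g\widehat h)=\widehat{\mathrm{rot}}_{\mu,\alpha}(\widehat g)+\widehat{\mathrm{rot}}_{\mu,\alpha}(\widehat h)$, provided each term exists.
   Context: $A$ is $\mathbb{Z}$ or the discrete group $\mathbb{R}$. $X$ is a path-connected space, $a\in\mathrm{H}^1(X;A)$, $\pi\colon\widehat X_a\to X$ a principal $A$-bundle with holonomy $a$, $T_r$ the action of $r\in A$. $\widehat G_a$ is the group of bundle automorphisms of $\widehat X_a$ (homeomorphisms $\widehat g$ with $\pi\circ\widehat g=g\circ\pi$ for a homeomorphism $g$ of $X$, said to cover $g$), and $G_a$ the group of homeomorphisms of $X$ preserving $a$. $\alpha$ is a real singular $1$-cocycle representing $a$, and $\theta\colon\widehat X_a\to\mathbb{R}$ a $0$-cochain with $d\theta=\pi^*\alpha$ and $\theta(T_r\widehat y)=\theta(\widehat y)+r$. For $x\in X$, $\rho_{x,\alpha}(\widehat g)=\theta(\widehat g(\widehat x))-\theta(\widehat x)$ with $\widehat x\in\pi^{-1}(x)$ (independent of choices); $\widehat{\mathrm{rot}}_{x,\alpha}(\widehat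 g)=\lim_{n\to\infty}\rho_{x,\alpha}(\widehat g^n)/n$ when it exists; for a $g$-invariant Borel probability measure $\mu$, $\widehat{\mathrm{rot}}_{\mu,\alpha}(\widehat g)=\int_X\rho_{x,\alpha}(\widehat g)\,d\mu(x)$ when it exists. *)

theory Defs
  imports "HOL-Analysis.Analysis" "HOL-Probability.Probability" "HOL-Homology.Homology"
begin

text \<open>The structure group A (Z or R with the discrete topology) is modelled as a subset
  of the reals, A = Z or A = UNIV. T r is the action of r in A on the total space.\<close>

definition principal_bundle ::
  "'a topology \<Rightarrow> 'b topology \<Rightarrow> ('b \<Rightarrow> 'a) \<Rightarrow> real set \<Rightarrow> (real \<Rightarrow> 'b \<Rightarrow> 'b) \<Rightarrow> bool" where
  "principal_bundle X Xh p A T \<longleftrightarrow>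
     continuous_map Xh X p \<and> p ` topspace Xh = topspace X \<and>
     (\<forall>r\<in>A. homeomorphic_map Xh Xh (T r)) \<and>
     (\<forall>y\<in>topspace Xh. T 0 y = y) \<and>
     (\<forall>r\<in>A. \<forall>s\<in>A. \<forall>y\<in>topspace Xh. T (r + s) y = T r (T s y)) \<and>
     (\<forall>r\<in>A. \<forall>y\<in>topspace Xh. p (T r y) = p y) \<and>
     (\<forall>y\<in>topspace Xh. \<forall>y'\<in>topspace Xh. p y = p y' \<longrightarrow> (\<exists>!r. r \<in> A \<and> y' = T r y)) \<and>
     (\<forall>x\<in>topspace X. \<exists>U s. openin X U \<and> x \<in> U \<and>
        continuous_map (subtopology X U) Xh s \<and> (\<forall>u\<in>U. p (s u) = u) \<and>
        homeomorphic_map (prod_topology (subtopology X U) (discrete_topology A))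
                         (subtopology Xh {y \<in> topspace Xh. p y \<in> U})
                         (\<lambda>(u, r). T r (s u)))"

definition covers ::
  "'a topology \<Rightarrow> 'b topology \<Rightarrow> ('b \<Rightarrow> 'a) \<Rightarrow> real set \<Rightarrow> (real \<Rightarrow> 'b \<Rightarrow> 'b)
     \<Rightarrow> ('b \<Rightarrow> 'b) \<Rightarrow> ('a \<Rightarrow> 'a) \<Rightarrow> bool" where
  "covers X Xh p A T gh g \<longleftrightarrow>
     homeomorphic_map Xh Xh gh \<and> homeomorphic_map X X g \<and>
     (\<forall>y\<in>topspace Xh. p (gh y) = g (p y)) \<and>
     (\<forall>r\<in>A. \<forall>y\<in>topspace Xh. gh (T r y) = T r (gh y))"

definition vtx0 :: "nat \<Rightarrow> real" where "vtx0 = (\<lambda>i. if i = 0 then 1 else 0)"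
definition vtx1 :: "nat \<Rightarrow> real" where "vtx1 = (\<lambda>i. if i = 1 then 1 else 0)"

definition cobd0 :: "('a \<Rightarrow> real) \<Rightarrow> ((nat \<Rightarrow> real) \<Rightarrow> 'a) \<Rightarrow> real" where
  "cobd0 f \<sigma> = f (\<sigma> vtx1) - f (\<sigma> vtx0)"

definition real_1cocycle :: "'a topology \<Rightarrow> (((nat \<Rightarrow> real) \<Rightarrow> 'a) \<Rightarrow> real) \<Rightarrow> bool" where
  "real_1cocycle X \<alpha> \<longleftrightarrow>
     (\<forall>\<tau>. singular_simplex 2 X \<tau> \<longrightarrow>
        \<alpha> (singular_face 2 0 \<tau>) - \<alpha> (singular_face 2 1 \<tau>) + \<alpha> (singular_face 2 2 \<tau>) = 0)"

definition preserves_class :: "'a topology \<Rightarrow> (((nat \<Rightarrow> real) \<Rightarrow> 'a) \<Rightarrow> real) \<Rightarrow> ('a \<Rightarrow> 'a) \<Rightarrow> bool" where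
  "preserves_class X \<alpha> g \<longleftrightarrow>
     (\<exists>f. \<forall>\<sigma>. singular_simplex 1 X \<sigma> \<longrightarrow> \<alpha> (simplex_map 1 g \<sigma>) - \<alpha> \<sigma> = cobd0 f \<sigma>)"

definition rho :: "'b topology \<Rightarrow> ('b \<Rightarrow> 'a) \<Rightarrow> ('b \<Rightarrow> real) \<Rightarrow> 'a \<Rightarrow> ('b \<Rightarrow> 'b) \<Rightarrow> real" where
  "rho Xh p \<theta> x gh = (let xh = (SOME y. y \<in> topspace Xh \<and> p y = x) in \<theta> (gh xh) - \<theta> xh)"

definition borel_sets_of :: "'a topology \<Rightarrow> 'a set set" where
  "borel_sets_of X = sigma_sets (topspace X) {U. openin X U}"

end

theory Submission
  imports Defs
begin

text \<open>Both parts rest on the cocycle identity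
  \<open>\<rho>\<^sub>x(gh \<circ> hh) = \<rho>\<^bsub>h x\<^esub>(gh) + \<rho>\<^sub>x(hh)\<close>. It holds because
  \<open>\<rho>\<^sub>x(F)\<close> may be evaluated at any lift of \<open>x\<close>: a bundle automorphism \<open>F\<close> commutes
  with the deck action, which shifts \<open>\<theta>\<close> by constants. At a common fixed point the
  identity makes \<open>\<rho>\<^sub>x\<close> additive and gives \<open>\<rho>\<^sub>x(F\<^sup>n) = n \<rho>\<^sub>x(F)\<close>, so the
  rotation numbers are the values of \<open>\<rho>\<^sub>x\<close>. After integration against \<open>\<mu>\<close>, the
  \<open>h\<close>-invariance of \<open>\<mu>\<close> turns the first summand into \<open>\<integral> \<rho>\<^sub>x(gh) d\<mu>\<close>.\<close>

lemma covers_maps_topspace: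
  "covers X Xh p A T F f \<Longrightarrow> y \<in> topspace Xh \<Longrightarrow> F y \<in> topspace Xh"
  unfolding covers_def using homeomorphic_imp_surjective_map by blast

lemma covers_comp:
  assumes "covers X Xh p A T F f" and "covers X Xh p A T G g"
  shows "covers X Xh p A T (F \<circ> G) (f \<circ> g)"
  using assms covers_maps_topspace[OF assms(2)]
  unfolding covers_def by (auto intro: homeomorphic_map_compose)

lemma covers_funpow:
  assumes "covers X Xh p A T F f"
  shows "covers X Xh p A T (F ^^ n) (f ^^ n)"
proof (induction n)
  case 0
  then show ?case by (simp add: covers_def flip: id_def)
next
  case (Suc n)
  then show ?case using covers_comp[OF assms Suc] by (simp only: funpow.simps)
qed

lemma rho_at_lift:
  assumes pbun: "principal_bundle X Xh p A T"
    and theta_T: "\<forall>r\<in>A. \<forall>y\<in>topspace Xh. \<theta> (T r y) = \<theta> y + r"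
    and F_maps: "\<forall>y\<in>topspace Xh. F y \<in> topspace Xh"
    and F_T: "\<forall>r\<in>A. \<forall>y\<in>topspace Xh. F (T r y) = T r (F y)"
    and y: "y \<in> topspace Xh"
  shows "rho Xh p \<theta> (p y) F = \<theta> (F y) - \<theta> y"
proof -
  define y' where "y' = (SOME y'. y' \<in> topspace Xh \<and> p y' = p y)"
  have y': "y' \<in> topspace Xh" "p y' = p y"
    unfolding y'_def using someI[of "\<lambda>y'. y' \<in> topspace Xh \<and> p y' = p y"] y by auto
  obtain r where r: "r \<in> A" "y = T r y'"
    using pbun y y' unfolding principal_bundle_def by metis
  have "\<theta> (F y) - \<theta> y = \<theta> (F y') - \<theta> y'"
    using theta_T F_T F_maps r y' by simp
  then show ?thesis
    unfolding rho_def y'_def Let_def by simp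
qed

lemma rho_comp:
  assumes pbun: "principal_bundle X Xh p A T"
    and theta_T: "\<forall>r\<in>A. \<forall>y\<in>topspace Xh. \<theta> (T r y) = \<theta> y + r"
    and F: "covers X Xh p A T F f" and G: "covers X Xh p A T G g" and x: "x \<in> topspace X"
  shows "rho Xh p \<theta> x (F \<circ> G) = rho Xh p \<theta> (g x) F + rho Xh p \<theta> x G"
proof -
  have "x \<in> p ` topspace Xh"
    using pbun x unfolding principal_bundle_def by blast
  then obtain y where y: "y \<in> topspace Xh" "p y = x"
    by blast
  have lift: "rho Xh p \<theta> (p z) H = \<theta> (H z) - \<theta> z"
    if "covers X Xh p A T H k" and "z \<in> topspace Xh" for H k z
    using rho_at_lift[OF pbun theta_T _ _ that(2)] covers_maps_topspace[OF that(1)] that(1)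
    unfolding covers_def by blast
  have Gy: "G y \<in> topspace Xh" "p (G y) = g x"
    using covers_maps_topspace[OF G y(1)] G y unfolding covers_def by auto
  show ?thesis
    using lift[OF covers_comp[OF F G] y(1)] lift[OF F Gy(1)] lift[OF G y(1)]
    by (simp add: y(2) Gy(2))
qed

lemma rho_funpow_fixed_point:
  assumes pbun: "principal_bundle X Xh p A T"
    and theta_T: "\<forall>r\<in>A. \<forall>y\<in>topspace Xh. \<theta> (T r y) = \<theta> y + r"
    and F: "covers X Xh p A T F f" and x: "x \<in> topspace X" and fixed: "f x = x"
  shows "rho Xh p \<theta> x (F ^^ n) = real n * rho Xh p \<theta> x F"
proof (induction n)
  case 0
  then show ?case by (simp add: rho_def)
next
  case (Suc n)
  have "rho Xh p \<theta> x (F ^^ Suc n) = rho Xh p \<theta> x (F ^^ n) + rho Xh p \<theta> x F"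
    unfolding funpow_Suc_right
    using rho_comp[OF pbun theta_T covers_funpow[OF F] F x] by (simp add: fixed)
  also have "\<dots> = real (Suc n) * rho Xh p \<theta> x F"
    by (simp add: Suc.IH algebra_simps)
  finally show ?case .
qed

lemma rho_funpow_div_tendsto_fixed_point:
  assumes pbun: "principal_bundle X Xh p A T"
    and theta_T: "\<forall>r\<in>A. \<forall>y\<in>topspace Xh. \<theta> (T r y) = \<theta> y + r"
    and F: "covers X Xh p A T F f" and x: "x \<in> topspace X" and fixed: "f x = x"
  shows "(\<lambda>n. rho Xh p \<theta> x (F ^^ n) / real n) \<longlonglongrightarrow> rho Xh p \<theta> x F"
proof (rule Lim_transform_eventually[OF tendsto_const])
  show "\<forall>\<^sub>F n in sequentially. rho Xh p \<theta> x F = rho Xh p \<theta> x (F ^^ n) / real n"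
    using eventually_gt_at_top[of "0::nat"]
    by eventually_elim (simp add: rho_funpow_fixed_point[OF pbun theta_T F x fixed])
qed

lemma integral_comp_invariant:
  fixes f :: "'a \<Rightarrow> real"
  assumes h: "h \<in> measurable M M" and inv: "distr M M h = M" and f: "integrable M f"
  shows "integrable M (\<lambda>x. f (h x))" and "(\<integral>x. f (h x) \<partial>M) = (\<integral>x. f x \<partial>M)"
proof -
  have f_meas: "f \<in> borel_measurable M" using f by (rule borel_measurable_integrable)
  show "integrable M (\<lambda>x. f (h x))"
    using integrable_distr_eq[OF h f_meas] inv f by simp
  show "(\<integral>x. f (h x) \<partial>M) = (\<integral>x. f x \<partial>M)"
    using integral_distr[OF h f_meas] inv by simp
qed

theorem proposition2p8:
  fixes X :: "'a topology" and Xh :: "'b topology" and p :: "'b \<Rightarrow> 'a"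
    and A :: "real set" and T :: "real \<Rightarrow> 'b \<Rightarrow> 'b"
    and \<alpha> :: "((nat \<Rightarrow> real) \<Rightarrow> 'a) \<Rightarrow> real" and \<theta> :: "'b \<Rightarrow> real"
    and g h :: "'a \<Rightarrow> 'a" and gh hh :: "'b \<Rightarrow> 'b"
  assumes A: "A = \<int> \<or> A = UNIV"
    and X: "path_connected_space X"
    and pbun: "principal_bundle X Xh p A T"
    and cocycle: "real_1cocycle X \<alpha>"
    and theta_d: "\<forall>\<sigma>. singular_simplex 1 Xh \<sigma> \<longrightarrow> cobd0 \<theta> \<sigma> = \<alpha> (simplex_map 1 p \<sigma>)"
    and theta_T: "\<forall>r\<in>A. \<forall>y\<in>topspace Xh. \<theta> (T r y) = \<theta> y + r"
    and gGa: "preserves_class X \<alpha> g" and hGa: "preserves_class X \<alpha> h"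
    and gcov: "covers X Xh p A T gh g" and hcov: "covers X Xh p A T hh h"
  shows
    "(\<forall>x\<in>topspace X. g x = x \<and> h x = x \<longrightarrow>
        (\<exists>Lg Lh.
          (\<lambda>n. rho Xh p \<theta> x (gh ^^ n) / real n) \<longlonglongrightarrow> Lg \<and>
          (\<lambda>n. rho Xh p \<theta> x (hh ^^ n) / real n) \<longlonglongrightarrow> Lh \<and>
          (\<lambda>n. rho Xh p \<theta> x ((gh \<circ> hh) ^^ n) / real n) \<longlonglongrightarrow> Lg + Lh))
     \<and>
     (\<forall>M :: 'a measure.
        prob_space M \<and> space M = topspace X \<and> sets M = borel_sets_of X \<and>
        g \<in> measurable M M \<and> distr M M g = M \<and>
        h \<in> measurable M M \<and> distr M M h = M \<and>
        integrable M (\<lambda>x. rho Xh p \<theta> x gh) \<and>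
        integrable M (\<lambda>x. rho Xh p \<theta> x hh) \<and>
        integrable M (\<lambda>x. rho Xh p \<theta> x (gh \<circ> hh))
        \<longrightarrow>
        (\<integral>x. rho Xh p \<theta> x (gh \<circ> hh) \<partial>M) =
          (\<integral>x. rho Xh p \<theta> x gh \<partial>M) + (\<integral>x. rho Xh p \<theta> x hh \<partial>M))"
proof (intro conjI ballI impI allI; (elim conjE)?)
  note rot_eq_rho_fixed = rho_funpow_div_tendsto_fixed_point[OF pbun theta_T]
  fix x assume x: "x \<in> topspace X" and "g x = x" "h x = x"
  then show "\<exists>Lg Lh.
          (\<lambda>n. rho Xh p \<theta> x (gh ^^ n) / real n) \<longlonglongrightarrow> Lg \<and>
          (\<lambda>n. rho Xh p \<theta> x (hh ^^ n) / real n) \<longlonglongrightarrow> Lh \<and>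
          (\<lambda>n. rho Xh p \<theta> x ((gh \<circ> hh) ^^ n) / real n) \<longlonglongrightarrow> Lg + Lh"
    using rot_eq_rho_fixed[OF gcov x] rot_eq_rho_fixed[OF hcov x]
      rot_eq_rho_fixed[OF covers_comp[OF gcov hcov] x] rho_comp[OF pbun theta_T gcov hcov x]
    by auto
next
  fix M :: "'a measure"
  assume space: "space M = topspace X" and h: "h \<in> measurable M M" "distr M M h = M"
    and g_int: "integrable M (\<lambda>x. rho Xh p \<theta> x gh)"
    and h_int: "integrable M (\<lambda>x. rho Xh p \<theta> x hh)"
  note g_int_h = integral_comp_invariant[OF h g_int]
  have "(\<integral>x. rho Xh p \<theta> x (gh \<circ> hh) \<partial>M)
      = (\<integral>x. rho Xh p \<theta> (h x) gh + rho Xh p \<theta> x hh \<partial>M)"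
    using rho_comp[OF pbun theta_T gcov hcov]
    by (intro Bochner_Integration.integral_cong) (auto simp: space)
  also have "\<dots> = (\<integral>x. rho Xh p \<theta> x gh \<partial>M) + (\<integral>x. rho Xh p \<theta> x hh \<partial>M)"
    using g_int_h h_int by simp
  finally show "(\<integral>x. rho Xh p \<theta> x (gh \<circ> hh) \<partial>M) =
          (\<integral>x. rho Xh p \<theta> x gh \<partial>M) + (\<integral>x. rho Xh p \<theta> x hh \<partial>M)" .
qed

end
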